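(* A persistent cochain complex $\mathbb{X}\in p\mathsf{Ch}^*_\mathbb{Q}$ is locally compact if and only if the persistence module $\mathbb{X}^k$ is locally compact for every $k\ge0$.
   Context: $p\mathsf{Ch}^*_\mathbb{Q}$ is the category of functors from $[0,\infty)$ to non-negatively graded rational cochain complexes; $\mathbb{X}^k$ is the persistence module of degree-$k$ cochains. A persistence module (functor $[0,\infty)\to\mathsf{Vec}_\mathbb{Q}$) is compact if it is a compact object (equivalently tame with finite-dimensional components), and is locally compact if every element lies in a compact submodule. A persistent complex is compact if it is a compact object of $p\mathsf{Ch}^*_\mathbb{Q}$ (equivalently tame and with each component a bounded, degreewise finite-dimensional complex), and $\mathbb{X}$ is locally compact if every element $x\in\mathbb{X}^k(r)$ lies in some compact subcomplex of $\mathbb{X}$. *)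

theory Defs
  imports Complex_Main
begin

text \<open>
Persistence modules over the rationals, indexed by the poset [0,\<infinity>).
All vector spaces live inside an ambient rational vector space of type 'v
(given by the scalar multiplication scale). A persistence module is a family
of subspaces V r (r \<ge> 0) together with structure maps f r s (0 \<le> r \<le> s),
which are linear on V r, land in V s, and are functorial.
\<close>

definition lin_on :: "(rat \<Rightarrow> 'v::ab_group_add \<Rightarrow> 'v) \<Rightarrow> 'v set \<Rightarrow> ('v \<Rightarrow> 'v) \<Rightarrow> bool" where
  "lin_on scale A g \<longleftrightarrow>
     (\<forall>x\<in>A. \<forall>y\<in>A. g (x + y) = g x + g y) \<and> (\<forall>c. \<forall>x\<in>A. g (scale c x) = scale c (g x))"

definition pmod :: "(rat \<Rightarrow> 'v::ab_group_add \<Rightarrow> 'v) \<Rightarrow> (real \<Rightarrow> 'v set) \<Rightarrow> (real \<Rightarrow> real \<Rightarrow> 'v \<Rightarrow> 'v) \<Rightarrow> bool" where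
  "pmod scale V f \<longleftrightarrow>
     vector_space scale \<and>
     (\<forall>r\<ge>0. module.subspace scale (V r)) \<and>
     (\<forall>r s. 0 \<le> r \<and> r \<le> s \<longrightarrow> f r s ` V r \<subseteq> V s \<and> lin_on scale (V r) (f r s)) \<and>
     (\<forall>r\<ge>0. \<forall>x\<in>V r. f r r x = x) \<and>
     (\<forall>r s t. 0 \<le> r \<and> r \<le> s \<and> s \<le> t \<longrightarrow> (\<forall>x\<in>V r. f s t (f r s x) = f r t x))"

definition fin_dim :: "(rat \<Rightarrow> 'v::ab_group_add \<Rightarrow> 'v) \<Rightarrow> 'v set \<Rightarrow> bool" where
  "fin_dim scale A \<longleftrightarrow> (\<exists>B. finite B \<and> B \<subseteq> A \<and> module.span scale B = A)"

definition tame :: "(real \<Rightarrow> 'v set) \<Rightarrow> (real \<Rightarrow> real \<Rightarrow> 'v \<Rightarrow> 'v) \<Rightarrow> bool" where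
  "tame V f \<longleftrightarrow> (\<exists>T. finite T \<and>
     (\<forall>r s. 0 \<le> r \<and> r \<le> s \<and> T \<inter> {r<..s} = {} \<longrightarrow> bij_betw (f r s) (V r) (V s)))"

definition compact_pmod :: "(rat \<Rightarrow> 'v::ab_group_add \<Rightarrow> 'v) \<Rightarrow> (real \<Rightarrow> 'v set) \<Rightarrow> (real \<Rightarrow> real \<Rightarrow> 'v \<Rightarrow> 'v) \<Rightarrow> bool" where
  "compact_pmod scale V f \<longleftrightarrow> pmod scale V f \<and> tame V f \<and> (\<forall>r\<ge>0. fin_dim scale (V r))"

definition sub_pmod :: "(rat \<Rightarrow> 'v::ab_group_add \<Rightarrow> 'v) \<Rightarrow> (real \<Rightarrow> 'v set) \<Rightarrow> (real \<Rightarrow> 'v set) \<Rightarrow> (real \<Rightarrow> real \<Rightarrow> 'v \<Rightarrow> 'v) \<Rightarrow> bool" where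
  "sub_pmod scale W V f \<longleftrightarrow>
     (\<forall>r\<ge>0. module.subspace scale (W r) \<and> W r \<subseteq> V r) \<and>
     (\<forall>r s. 0 \<le> r \<and> r \<le> s \<longrightarrow> f r s ` W r \<subseteq> W s)"

definition loc_compact_pmod :: "(rat \<Rightarrow> 'v::ab_group_add \<Rightarrow> 'v) \<Rightarrow> (real \<Rightarrow> 'v set) \<Rightarrow> (real \<Rightarrow> real \<Rightarrow> 'v \<Rightarrow> 'v) \<Rightarrow> bool" where
  "loc_compact_pmod scale V f \<longleftrightarrow>
     (\<forall>r\<ge>0. \<forall>x\<in>V r. \<exists>W. sub_pmod scale W V f \<and> compact_pmod scale W f \<and> x \<in> W r)"

text \<open>Persistent (non-negatively graded) cochain complexes: C k is the
persistence module of degree-k cochains with structure maps F k, and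
D k r : C k r \<rightarrow> C (k+1) r is the differential at index r.\<close>
definition pcomplex :: "(rat \<Rightarrow> 'v::ab_group_add \<Rightarrow> 'v) \<Rightarrow> (nat \<Rightarrow> real \<Rightarrow> 'v set) \<Rightarrow> (nat \<Rightarrow> real \<Rightarrow> real \<Rightarrow> 'v \<Rightarrow> 'v) \<Rightarrow> (nat \<Rightarrow> real \<Rightarrow> 'v \<Rightarrow> 'v) \<Rightarrow> bool" where
  "pcomplex scale C F D \<longleftrightarrow>
     (\<forall>k. pmod scale (C k) (F k)) \<and>
     (\<forall>k. \<forall>r\<ge>0. D k r ` C k r \<subseteq> C (Suc k) r \<and> lin_on scale (C k r) (D k r)) \<and>
     (\<forall>k. \<forall>r\<ge>0. \<forall>x\<in>C k r. D (Suc k) r (D k r x) = 0) \<and>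
     (\<forall>k r s. 0 \<le> r \<and> r \<le> s \<longrightarrow> (\<forall>x\<in>C k r. F (Suc k) r s (D k r x) = D k s (F k r s x)))"

definition compact_pcomplex :: "(rat \<Rightarrow> 'v::ab_group_add \<Rightarrow> 'v) \<Rightarrow> (nat \<Rightarrow> real \<Rightarrow> 'v set) \<Rightarrow> (nat \<Rightarrow> real \<Rightarrow> real \<Rightarrow> 'v \<Rightarrow> 'v) \<Rightarrow> (nat \<Rightarrow> real \<Rightarrow> 'v \<Rightarrow> 'v) \<Rightarrow> bool" where
  "compact_pcomplex scale C F D \<longleftrightarrow>
     pcomplex scale C F D \<and>
     (\<exists>T. finite T \<and> (\<forall>k r s. 0 \<le> r \<and> r \<le> s \<and> T \<inter> {r<..s} = {} \<longrightarrow> bij_betw (F k r s) (C k r) (C k s))) \<and>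
     (\<exists>N. \<forall>k\<ge>N. \<forall>r\<ge>0. C k r = {0}) \<and>
     (\<forall>k. \<forall>r\<ge>0. fin_dim scale (C k r))"

definition sub_pcomplex :: "(rat \<Rightarrow> 'v::ab_group_add \<Rightarrow> 'v) \<Rightarrow> (nat \<Rightarrow> real \<Rightarrow> 'v set) \<Rightarrow> (nat \<Rightarrow> real \<Rightarrow> 'v set) \<Rightarrow> (nat \<Rightarrow> real \<Rightarrow> real \<Rightarrow> 'v \<Rightarrow> 'v) \<Rightarrow> (nat \<Rightarrow> real \<Rightarrow> 'v \<Rightarrow> 'v) \<Rightarrow> bool" where
  "sub_pcomplex scale Y C F D \<longleftrightarrow>
     (\<forall>k. sub_pmod scale (Y k) (C k) (F k)) \<and>
     (\<forall>k. \<forall>r\<ge>0. D k r ` Y k r \<subseteq> Y (Suc k) r)"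

definition loc_compact_pcomplex :: "(rat \<Rightarrow> 'v::ab_group_add \<Rightarrow> 'v) \<Rightarrow> (nat \<Rightarrow> real \<Rightarrow> 'v set) \<Rightarrow> (nat \<Rightarrow> real \<Rightarrow> real \<Rightarrow> 'v \<Rightarrow> 'v) \<Rightarrow> (nat \<Rightarrow> real \<Rightarrow> 'v \<Rightarrow> 'v) \<Rightarrow> bool" where
  "loc_compact_pcomplex scale C F D \<longleftrightarrow>
     (\<forall>k. \<forall>r\<ge>0. \<forall>x\<in>C k r. \<exists>Y. sub_pcomplex scale Y C F D \<and> compact_pcomplex scale Y F D \<and> x \<in> Y k r)"

end

theory Submission
  imports Defs
begin

text \<open>
A compact subcomplex is degreewise a compact submodule. Conversely, let x lie in a compact
submodule W of X^k. W is generated by finitely many elements (bases of W at 0 and at its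
critical values), and their differentials generate the submodule D(W) of X^(k+1). In a locally
compact persistence module every finitely generated submodule is compact: adjoining a generator
y born at t creates at most the new critical values t and the infimum e of the indices at which y
enters the old submodule, and y has already entered at e itself, because an element that dies
immediately after its index lies in a compact submodule, whose maps are injective there, and so
is 0. Hence W in degree k, D(W) in degree k+1 and 0 elsewhere form a compact subcomplex
containing x.
\<close>

lemma lin_on_subset: "lin_on scale A g \<Longrightarrow> B \<subseteq> A \<Longrightarrow> lin_on scale B g"
  unfolding lin_on_def by blast

lemma pmod_sub_pmod: "pmod scale V f \<Longrightarrow> sub_pmod scale W V f \<Longrightarrow> pmod scale W f"
  unfolding pmod_def sub_pmod_def by (meson lin_on_subset order.trans subsetD)

lemma finite_avoids_right_interval:
  fixes e s0 :: real
  assumes "finite T" "e < s0"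
  obtains s where "e < s" "s \<le> s0" "T \<inter> {e<..s} = {}"
proof -
  define m where "m = Min (insert s0 {x\<in>T. e < x})"
  have fin: "finite (insert s0 {x\<in>T. e < x})" using assms(1) by simp
  have "e < m" unfolding m_def using assms fin by (subst Min_gr_iff) auto
  moreover have "m \<le> s0" "\<And>x. x \<in> T \<Longrightarrow> e < x \<Longrightarrow> m \<le> x" unfolding m_def using fin by auto
  ultimately show ?thesis
    using that[of "(e + m) / 2"] by (auto simp: disjoint_iff) (smt (verit))+
qed

locale rat_vector_space = vector_space scale for scale :: "rat \<Rightarrow> 'v::ab_group_add \<Rightarrow> 'v"
begin

lemma lin_on_zero: "lin_on scale A g \<Longrightarrow> 0 \<in> A \<Longrightarrow> g 0 = 0"
  unfolding lin_on_def by (metis add_0 add_cancel_right_right)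

lemma lin_on_diff:
  assumes "lin_on scale A g" "subspace A" "x \<in> A" "y \<in> A"
  shows "g (x - y) = g x - g y"
proof -
  have "x - y \<in> A" using assms subspace_diff by blast
  then have "g (x - y + y) = g (x - y) + g y" using assms unfolding lin_on_def by blast
  then show ?thesis by simp
qed

lemma lin_on_image_span:
  assumes g: "lin_on scale A g" and A: "subspace A" and X: "X \<subseteq> A"
  shows "g ` span X = span (g ` X)"
proof -
  have XA: "span X \<subseteq> A" using span_minimal[OF X A] .
  have g_lincomb: "g (scale c x + x') = scale c (g x) + g x'" if "x \<in> A" "x' \<in> A" for c x x'
    using g that subspace_scale[OF A] unfolding lin_on_def by simp
  have "x \<in> span X \<and> g x \<in> span (g ` X)" if "x \<in> span X" for x
    using that
  proof (induction rule: span_induct_alt)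
    case base
    then show ?case using lin_on_zero[OF g subspace_0[OF A]] span_zero by simp
  next
    case (step c x x')
    then have "g (scale c x + x') = scale c (g x) + g x'" using g_lincomb X XA by blast
    then show ?case using step by (metis imageI span_add span_base span_scale)
  qed
  moreover have "z \<in> g ` span X" if "z \<in> span (g ` X)" for z
    using that
  proof (induction rule: span_induct_alt)
    case base
    then show ?case using lin_on_zero[OF g subspace_0[OF A]] span_zero by force
  next
    case (step c w z)
    then obtain x x' where "x \<in> X" "w = g x" "x' \<in> span X" "z = g x'" by blast
    moreover have "g (scale c x + x') = scale c w + z" using g_lincomb X XA calculation by blast
    moreover have "scale c x + x' \<in> span X" using calculation by (meson span_add span_base span_scale)
    ultimately show ?case by (metis imageI)
  qed
  ultimately show ?thesis by blast
qed

lemma lin_on_inj_on_iff: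
  assumes "lin_on scale A g" "subspace A"
  shows "inj_on g A \<longleftrightarrow> (\<forall>x\<in>A. g x = 0 \<longrightarrow> x = 0)"
  using assms lin_on_zero[OF assms(1)] lin_on_diff[OF assms] subspace_0 subspace_diff
  unfolding inj_on_def by (metis eq_iff_diff_eq_0)

end

definition elements_in :: "(real \<Rightarrow> 'v set) \<Rightarrow> (real \<times> 'v) set \<Rightarrow> bool" where
  "elements_in V S \<longleftrightarrow> (\<forall>(t, y)\<in>S. 0 \<le> t \<and> y \<in> V t)"

definition generators_at :: "(real \<Rightarrow> real \<Rightarrow> 'v \<Rightarrow> 'v) \<Rightarrow> (real \<times> 'v) set \<Rightarrow> real \<Rightarrow> 'v set" where
  "generators_at f S s = (\<lambda>(t, y). f t s y) ` {p\<in>S. fst p \<le> s}"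

definition generated_pmod ::
    "(rat \<Rightarrow> 'v::ab_group_add \<Rightarrow> 'v) \<Rightarrow> (real \<Rightarrow> real \<Rightarrow> 'v \<Rightarrow> 'v) \<Rightarrow> (real \<times> 'v) set \<Rightarrow> real \<Rightarrow> 'v set" where
  "generated_pmod scale f S s = module.span scale (generators_at f S s)"

definition entry_times :: "(real \<Rightarrow> 'v set) \<Rightarrow> (real \<Rightarrow> real \<Rightarrow> 'v \<Rightarrow> 'v) \<Rightarrow> real \<Rightarrow> 'v \<Rightarrow> real set" where
  "entry_times W f t y = {s. t \<le> s \<and> f t s y \<in> W s}"

locale persistence_module =
  fixes scale :: "rat \<Rightarrow> 'v::ab_group_add \<Rightarrow> 'v"
    and V :: "real \<Rightarrow> 'v set"
    and f :: "real \<Rightarrow> real \<Rightarrow> 'v \<Rightarrow> 'v"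
  assumes pmod: "pmod scale V f"

sublocale persistence_module \<subseteq> rat_vector_space scale
  using pmod unfolding pmod_def by (simp add: rat_vector_space_def)

context persistence_module
begin

lemma subspace_V: "0 \<le> r \<Longrightarrow> subspace (V r)"
  using pmod unfolding pmod_def by blast

lemma structure_map_in: "0 \<le> r \<Longrightarrow> r \<le> s \<Longrightarrow> x \<in> V r \<Longrightarrow> f r s x \<in> V s"
  using pmod unfolding pmod_def by blast

lemma lin_on_structure_map: "0 \<le> r \<Longrightarrow> r \<le> s \<Longrightarrow> lin_on scale (V r) (f r s)"
  using pmod unfolding pmod_def by blast

lemma structure_map_comp: "0 \<le> r \<Longrightarrow> r \<le> s \<Longrightarrow> s \<le> t \<Longrightarrow> x \<in> V r \<Longrightarrow> f s t (f r s x) = f r t x"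
  using pmod unfolding pmod_def by blast

lemma structure_map_zero: "0 \<le> r \<Longrightarrow> r \<le> s \<Longrightarrow> f r s 0 = 0"
  using lin_on_zero lin_on_structure_map subspace_V subspace_0 by blast

lemma sub_pmod_zero: "sub_pmod scale (\<lambda>_. {0}) V f"
  unfolding sub_pmod_def using subspace_V subspace_0 structure_map_zero by auto

lemma compact_pmod_zero: "compact_pmod scale (\<lambda>_. {0}) f"
  unfolding compact_pmod_def tame_def fin_dim_def
  using pmod_sub_pmod[OF pmod sub_pmod_zero] structure_map_zero
  by (auto simp: bij_betw_def intro!: exI[of _ "{}"])

lemma generators_subset:
  assumes "elements_in V S" "0 \<le> s"
  shows "generators_at f S s \<subseteq> V s"
proof
  fix w assume "w \<in> generators_at f S s"
  then obtain t y where "(t, y) \<in> S" "t \<le> s" "w = f t s y" unfolding generators_at_def by auto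
  then show "w \<in> V s" using assms structure_map_in unfolding elements_in_def by blast
qed

lemma generated_subset: "elements_in V S \<Longrightarrow> 0 \<le> s \<Longrightarrow> generated_pmod scale f S s \<subseteq> V s"
  unfolding generated_pmod_def using span_minimal[OF generators_subset subspace_V] .

lemma structure_map_generated:
  assumes S: "elements_in V S" and rs: "0 \<le> r" "r \<le> s"
  shows "f r s ` generated_pmod scale f S r \<subseteq> generated_pmod scale f S s"
proof -
  have "f r s ` generators_at f S r \<subseteq> generators_at f S s"
  proof
    fix w assume "w \<in> f r s ` generators_at f S r"
    then obtain t y where ty: "(t, y) \<in> S" "t \<le> r" "w = f r s (f t r y)"
      unfolding generators_at_def by auto
    then have "w = f t s y" using S rs structure_map_comp unfolding elements_in_def by blast
    then show "w \<in> generators_at f S s" using ty rs unfolding generators_at_def by force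
  qed
  then show ?thesis
    unfolding generated_pmod_def
    using lin_on_image_span[OF lin_on_structure_map[OF rs] subspace_V generators_subset[OF S]] rs
    by (blast dest: span_mono)
qed

lemma sub_pmod_generated: "elements_in V S \<Longrightarrow> sub_pmod scale (generated_pmod scale f S) V f"
  unfolding sub_pmod_def using generated_subset structure_map_generated
  by (simp add: generated_pmod_def)

lemma fin_dim_generated: "finite S \<Longrightarrow> fin_dim scale (generated_pmod scale f S s)"
  unfolding fin_dim_def generated_pmod_def
  by (intro exI[of _ "generators_at f S s"]) (simp add: generators_at_def span_superset)

lemma generated_insert_less:
  "s < t \<Longrightarrow> generated_pmod scale f (insert (t, y) S) s = generated_pmod scale f S s"
  unfolding generated_pmod_def generators_at_def by (rule arg_cong[where f = span]) auto

lemma generated_insert_ge: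
  assumes "t \<le> s"
  shows "generated_pmod scale f (insert (t, y) S) s = span (insert (f t s y) (generated_pmod scale f S s))"
proof -
  have "generators_at f (insert (t, y) S) s = insert (f t s y) (generators_at f S s)"
    using assms unfolding generators_at_def by auto
  then show ?thesis unfolding generated_pmod_def by (simp add: span_insert span_span)
qed

lemma compact_pmod_finitely_generated:
  assumes "compact_pmod scale V f"
  obtains S where "finite S" "elements_in V S" "\<And>s. 0 \<le> s \<Longrightarrow> V s = generated_pmod scale f S s"
proof -
  obtain T where T: "finite T"
    "\<And>r s. 0 \<le> r \<and> r \<le> s \<and> T \<inter> {r<..s} = {} \<Longrightarrow> bij_betw (f r s) (V r) (V s)"
    using assms unfolding compact_pmod_def tame_def by blast
  \<comment> \<open>Bases of V at 0 and at the critical values generate V.\<close>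
  define P where "P = insert 0 {x\<in>T. 0 \<le> x}"
  have P: "finite P" "\<And>p. p \<in> P \<Longrightarrow> 0 \<le> p" using T(1) unfolding P_def by auto
  have "\<forall>p\<in>P. \<exists>B. finite B \<and> B \<subseteq> V p \<and> span B = V p"
    using assms P(2) unfolding compact_pmod_def fin_dim_def by blast
  then obtain B where B: "\<And>p. p \<in> P \<Longrightarrow> finite (B p) \<and> B p \<subseteq> V p \<and> span (B p) = V p"
    by metis
  define S where "S = Sigma P B"
  have S: "finite S" "elements_in V S" unfolding S_def elements_in_def using P B by auto
  have "V s = generated_pmod scale f S s" if s: "0 \<le> s" for s
  proof
    show "generated_pmod scale f S s \<subseteq> V s" using generated_subset[OF S(2) s] .
    define p where "p = Max {q\<in>P. q \<le> s}"
    have "{q\<in>P. q \<le> s} \<noteq> {}" using s unfolding P_def by auto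
    then have p: "p \<in> P" "p \<le> s" "\<And>q. q \<in> P \<Longrightarrow> q \<le> s \<Longrightarrow> q \<le> p"
      using P(1) Max_in[of "{q\<in>P. q \<le> s}"] unfolding p_def by auto
    have p0: "0 \<le> p" using P(2) p(1) .
    have "x \<notin> T" if "p < x" "x \<le> s" for x using p(3)[of x] p0 that unfolding P_def by auto
    then have "T \<inter> {p<..s} = {}" by auto
    then have "V s = f p s ` V p" using T(2) p0 p(2) unfolding bij_betw_def by blast
    also have "\<dots> = span (f p s ` B p)"
      using lin_on_image_span[OF lin_on_structure_map[OF p0 p(2)] subspace_V[OF p0]] B[OF p(1)] by metis
    also have "\<dots> \<subseteq> generated_pmod scale f S s"
      unfolding generated_pmod_def generators_at_def S_def using p by (intro span_mono) force
    finally show "V s \<subseteq> generated_pmod scale f S s" .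
  qed
  then show ?thesis using S that by blast
qed

lemma bij_betw_span_insert:
  assumes W: "sub_pmod scale W V f" and t: "0 \<le> t" "y \<in> V t" and rs: "t \<le> r" "r \<le> s"
    and bij: "bij_betw (f r s) (W r) (W s)"
    and entry: "s \<in> entry_times W f t y \<Longrightarrow> r \<in> entry_times W f t y"
  shows "bij_betw (f r s) (span (insert (f t r y) (W r))) (span (insert (f t s y) (W s)))"
proof -
  let ?A = "span (insert (f t r y) (W r))"
  have r: "0 \<le> r" using t rs by simp
  have Wr: "subspace (W r)" "W r \<subseteq> V r" using W r unfolding sub_pmod_def by auto
  have Ws: "subspace (W s)" using W r rs unfolding sub_pmod_def by auto
  have w_r: "f t r y \<in> V r" using structure_map_in t rs by blast
  have w_s: "f r s (f t r y) = f t s y" using structure_map_comp t rs by blast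
  have A: "insert (f t r y) (W r) \<subseteq> V r" using w_r Wr by blast
  have lin: "lin_on scale (V r) (f r s)" using lin_on_structure_map r rs by blast
  have image: "f r s ` ?A = span (insert (f t s y) (W s))"
    using lin_on_image_span[OF lin subspace_V[OF r] A] w_s bij by (simp add: bij_betw_def)
  have kernel: "z = 0" if z: "z \<in> ?A" "f r s z = 0" for z
  proof -
    obtain c where "z - scale c (f t r y) \<in> span (W r)" using z(1) by (auto simp: span_insert)
    then have u: "z - scale c (f t r y) \<in> W r" by (metis Wr(1) span_eq_iff)
    define u where "u = z - scale c (f t r y)"
    have "u \<in> V r" "scale c (f t r y) \<in> V r"
      using u Wr(2) subspace_scale[OF subspace_V[OF r] w_r] unfolding u_def by auto
    then have "f r s (u + scale c (f t r y)) = f r s u + scale c (f t s y)"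
      using lin w_r w_s unfolding lin_on_def by simp
    then have "f r s z = f r s u + scale c (f t s y)" unfolding u_def by simp
    then have fu: "f r s u = - scale c (f t s y)" using z(2) by (simp add: eq_neg_iff_add_eq_0)
    have "z \<in> W r"
    proof (cases "c = 0")
      case True
      then show ?thesis using u by simp
    next
      case False
      have "f r s u \<in> W s" using bij u unfolding u_def bij_betw_def by blast
      then have "scale (- 1 / c) (f r s u) \<in> W s" using Ws subspace_scale by blast
      then have "s \<in> entry_times W f t y" using fu False rs unfolding entry_times_def by simp
      then have "f t r y \<in> W r" using entry unfolding entry_times_def by simp
      then show ?thesis using u Wr(1) subspace_add subspace_scale unfolding u_def
        by (metis diff_add_cancel)
    qed
    then show "z = 0"
      using bij z(2) Wr(1) subspace_0 structure_map_zero[OF r rs(2)]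
      unfolding bij_betw_def inj_on_def by metis
  qed
  have "lin_on scale ?A (f r s)" using lin_on_subset[OF lin span_minimal[OF A subspace_V[OF r]]] .
  then have "inj_on (f r s) ?A" using kernel lin_on_inj_on_iff subspace_span by blast
  then show ?thesis using image unfolding bij_betw_def by blast
qed

lemma entry_times_upward:
  assumes W: "sub_pmod scale W V f" and t: "0 \<le> t" "y \<in> V t"
    and m: "m \<in> entry_times W f t y" "m \<le> m'"
  shows "m' \<in> entry_times W f t y"
proof -
  have tm: "t \<le> m" "f t m y \<in> W m" using m(1) unfolding entry_times_def by auto
  moreover have "0 \<le> m" using t(1) tm(1) by simp
  ultimately have "f m m' (f t m y) \<in> W m'" using W m(2) unfolding sub_pmod_def by blast
  moreover have "f m m' (f t m y) = f t m' y" using structure_map_comp t tm(1) m(2) by blast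
  ultimately show ?thesis using tm(1) m(2) unfolding entry_times_def by auto
qed

lemma common_preimage_right:
  assumes W: "sub_pmod scale W V f" and t: "0 \<le> t" "y \<in> V t" "t \<le> e" and s0: "e < s0"
    and bij: "\<And>s. e < s \<Longrightarrow> s \<le> s0 \<Longrightarrow> bij_betw (f e s) (W e) (W s)"
    and entered: "\<And>s. e < s \<Longrightarrow> f t s y \<in> W s"
  obtains u where "u \<in> W e" "\<And>s. e < s \<Longrightarrow> s \<le> s0 \<Longrightarrow> f e s u = f t s y"
proof -
  have e: "0 \<le> e" using t by simp
  have WV: "W e \<subseteq> V e" using W e unfolding sub_pmod_def by blast
  obtain u where u: "u \<in> W e" "f e s0 u = f t s0 y"
    using bij[OF s0 order_refl] entered[OF s0] unfolding bij_betw_def by (metis imageE)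
  have "f e s u = f t s y" if s: "e < s" "s \<le> s0" for s
  proof -
    obtain u' where u': "u' \<in> W e" "f e s u' = f t s y"
      using bij[OF s] entered[OF s(1)] unfolding bij_betw_def by (metis imageE)
    have "f e s0 u' = f s s0 (f e s u')" using structure_map_comp e s u'(1) WV by force
    also have "\<dots> = f t s0 y" using u'(2) structure_map_comp t s by force
    finally have "u' = u" using bij[OF s0 order_refl] u u'(1) unfolding bij_betw_def inj_on_def by metis
    then show ?thesis using u' by simp
  qed
  then show ?thesis using that u(1) by blast
qed

end

locale loc_compact_persistence_module = persistence_module +
  assumes loc_compact: "loc_compact_pmod scale V f"
begin

lemma killed_immediately_imp_zero:
  assumes e: "0 \<le> e" "z \<in> V e" and s0: "e < s0"
    and killed: "\<And>s. e < s \<Longrightarrow> s \<le> s0 \<Longrightarrow> f e s z = 0"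
  shows "z = 0"
proof -
  obtain W where W: "sub_pmod scale W V f" "compact_pmod scale W f" "z \<in> W e"
    using loc_compact e unfolding loc_compact_pmod_def by blast
  obtain T where T: "finite T"
    "\<And>r s. 0 \<le> r \<and> r \<le> s \<and> T \<inter> {r<..s} = {} \<Longrightarrow> bij_betw (f r s) (W r) (W s)"
    using W(2) unfolding compact_pmod_def tame_def by blast
  obtain s where s: "e < s" "s \<le> s0" "T \<inter> {e<..s} = {}"
    using finite_avoids_right_interval[OF T(1) s0] .
  have "inj_on (f e s) (W e)" using T(2) s e(1) unfolding bij_betw_def by auto
  moreover have "0 \<in> W e" using W(1) e(1) subspace_0 unfolding sub_pmod_def by blast
  moreover have "f e s z = f e s 0" using killed[OF s(1,2)] structure_map_zero e(1) s(1) by simp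
  ultimately show "z = 0" using W(3) unfolding inj_on_def by blast
qed

lemma Inf_entry_times_mem:
  assumes W: "sub_pmod scale W V f" "tame W f" and t: "0 \<le> t" "y \<in> V t"
    and ne: "entry_times W f t y \<noteq> {}"
  shows "Inf (entry_times W f t y) \<in> entry_times W f t y"
proof -
  let ?M = "entry_times W f t y"
  define e where "e = Inf ?M"
  have te: "t \<le> e" unfolding e_def using ne by (intro cInf_greatest) (auto simp: entry_times_def)
  then have e: "0 \<le> e" "f t e y \<in> V e" using t structure_map_in by auto
  have WV: "W e \<subseteq> V e" using W(1) e(1) unfolding sub_pmod_def by blast
  obtain T where T: "finite T"
    "\<And>r s. 0 \<le> r \<and> r \<le> s \<and> T \<inter> {r<..s} = {} \<Longrightarrow> bij_betw (f r s) (W r) (W s)"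
    using W(2) unfolding tame_def by blast
  obtain s0 where s0: "e < s0" "T \<inter> {e<..s0} = {}"
    using finite_avoids_right_interval[OF T(1), of e "e + 1"] by auto
  have bij: "bij_betw (f e s) (W e) (W s)" if "e < s" "s \<le> s0" for s
  proof -
    have "T \<inter> {e<..s} = {}" using s0(2) that by auto
    then show ?thesis using T(2)[of e s] that e(1) by simp
  qed
  have entered: "f t s y \<in> W s" if es: "e < s" for s
  proof -
    obtain m where "m \<in> ?M" "m < s" using cInf_lessD[OF ne] es unfolding e_def by blast
    then show ?thesis using entry_times_upward[OF W(1) t, of m s] unfolding entry_times_def by auto
  qed
  obtain u where u: "u \<in> W e" "\<And>s. e < s \<Longrightarrow> s \<le> s0 \<Longrightarrow> f e s u = f t s y"
    using common_preimage_right[OF W(1) t te s0(1) bij] entered by blast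
  have "f t e y - u = 0"
  proof (rule killed_immediately_imp_zero[OF e(1) _ s0(1)])
    show "f t e y - u \<in> V e" using subspace_diff[OF subspace_V[OF e(1)] e(2)] u(1) WV by blast
    fix s assume s: "e < s" "s \<le> s0"
    have "f e s (f t e y - u) = f e s (f t e y) - f e s u"
      using lin_on_diff[OF lin_on_structure_map subspace_V] e u(1) WV s by (meson less_imp_le subsetD)
    also have "\<dots> = 0" using u(2)[OF s] structure_map_comp t te s by force
    finally show "f e s (f t e y - u) = 0" .
  qed
  then show ?thesis using u(1) te unfolding e_def entry_times_def by simp
qed

lemma tame_generated:
  assumes "finite S" "elements_in V S"
  shows "tame (generated_pmod scale f S) f"
  using assms
proof (induction S rule: finite_induct)
  case empty
  have "generated_pmod scale f {} s = {0}" for s by (simp add: generated_pmod_def generators_at_def)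
  then show ?case unfolding tame_def
    by (intro exI[of _ "{}"]) (auto simp: bij_betw_def structure_map_zero)
next
  case (insert p S)
  obtain t y where p: "p = (t, y)" by fastforce
  have S: "elements_in V S" and t: "0 \<le> t" "y \<in> V t"
    using insert.prems p unfolding elements_in_def by auto
  define g where "g = generated_pmod scale f S"
  have g: "sub_pmod scale g V f" "tame g f"
    unfolding g_def using sub_pmod_generated[OF S] insert.IH[OF S] by auto
  obtain T where T: "finite T"
    "\<And>r s. 0 \<le> r \<and> r \<le> s \<and> T \<inter> {r<..s} = {} \<Longrightarrow> bij_betw (f r s) (g r) (g s)"
    using g(2) unfolding tame_def by blast
  \<comment> \<open>When y never enters g, e is a junk value, but then it is not needed.\<close>
  define e where "e = Inf (entry_times g f t y)"
  show ?case unfolding tame_def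
  proof (intro exI conjI allI impI)
    show "finite (insert t (insert e T))" using T(1) by simp
    fix r s assume rs: "0 \<le> r \<and> r \<le> s \<and> insert t (insert e T) \<inter> {r<..s} = {}"
    then have bij: "bij_betw (f r s) (g r) (g s)" using T(2) by auto
    show "bij_betw (f r s) (generated_pmod scale f (insert p S) r) (generated_pmod scale f (insert p S) s)"
    proof (cases "s < t")
      case True
      then show ?thesis using bij rs by (simp add: p g_def generated_insert_less)
    next
      case False
      with rs have tr: "t \<le> r" by auto
      have "r \<in> entry_times g f t y" if s: "s \<in> entry_times g f t y"
      proof -
        have "bdd_below (entry_times g f t y)"
          by (rule bdd_belowI[of _ t]) (simp add: entry_times_def)
        then have "e \<in> entry_times g f t y" "e \<le> s"
          using Inf_entry_times_mem[OF g t] cInf_lower[OF s] s unfolding e_def by auto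
        moreover have "e \<le> r" using rs calculation(2) by auto
        ultimately show ?thesis using entry_times_upward[OF g(1) t] by blast
      qed
      then show ?thesis
        using bij_betw_span_insert[OF g(1) t tr _ bij] rs tr
        by (simp add: p g_def generated_insert_ge)
    qed
  qed
qed

lemma compact_generated:
  "finite S \<Longrightarrow> elements_in V S \<Longrightarrow> compact_pmod scale (generated_pmod scale f S) f"
  unfolding compact_pmod_def
  using pmod_sub_pmod[OF pmod sub_pmod_generated] tame_generated fin_dim_generated by blast

end

lemma compact_pcomplex_iff:
  assumes Y: "pcomplex scale Y F D"
  shows "compact_pcomplex scale Y F D \<longleftrightarrow>
    (\<forall>k. compact_pmod scale (Y k) (F k)) \<and> (\<exists>N. \<forall>k\<ge>N. \<forall>r\<ge>0. Y k r = {0})"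
proof
  assume "compact_pcomplex scale Y F D"
  then obtain T where T: "finite T"
      "\<forall>k r s. 0 \<le> r \<and> r \<le> s \<and> T \<inter> {r<..s} = {} \<longrightarrow> bij_betw (F k r s) (Y k r) (Y k s)"
    and bounded: "\<exists>N. \<forall>k\<ge>N. \<forall>r\<ge>0. Y k r = {0}"
    and fin: "\<forall>k. \<forall>r\<ge>0. fin_dim scale (Y k r)"
    unfolding compact_pcomplex_def by blast
  have "compact_pmod scale (Y k) (F k)" for k
    unfolding compact_pmod_def tame_def
    using Y T fin unfolding pcomplex_def by (intro conjI exI[of _ T]) auto
  then show "(\<forall>k. compact_pmod scale (Y k) (F k)) \<and> (\<exists>N. \<forall>k\<ge>N. \<forall>r\<ge>0. Y k r = {0})"
    using bounded by blast
next
  assume comp: "(\<forall>k. compact_pmod scale (Y k) (F k)) \<and> (\<exists>N. \<forall>k\<ge>N. \<forall>r\<ge>0. Y k r = {0})"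
  then obtain N where N: "\<And>k r. N \<le> k \<Longrightarrow> 0 \<le> r \<Longrightarrow> Y k r = {0}" by blast
  have "\<forall>k. \<exists>T. finite T \<and>
      (\<forall>r s. 0 \<le> r \<and> r \<le> s \<and> T \<inter> {r<..s} = {} \<longrightarrow> bij_betw (F k r s) (Y k r) (Y k s))"
    using comp unfolding compact_pmod_def tame_def by blast
  then obtain T where "\<forall>k. finite (T k) \<and>
      (\<forall>r s. 0 \<le> r \<and> r \<le> s \<and> T k \<inter> {r<..s} = {} \<longrightarrow> bij_betw (F k r s) (Y k r) (Y k s))"
    by (rule choice[THEN exE])
  then have T_fin: "\<And>k. finite (T k)"
    and T_bij: "\<And>k r s. 0 \<le> r \<Longrightarrow> r \<le> s \<Longrightarrow> T k \<inter> {r<..s} = {} \<Longrightarrow> bij_betw (F k r s) (Y k r) (Y k s)"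
    by blast+
  have "bij_betw (F k r s) (Y k r) (Y k s)"
    if rs: "0 \<le> r" "r \<le> s" "(\<Union>j<N. T j) \<inter> {r<..s} = {}" for k r s
  proof (cases "k < N")
    case True
    then have "T k \<inter> {r<..s} = {}" using rs(3) by blast
    then show ?thesis using T_bij rs by blast
  next
    case False
    have "persistence_module scale (Y k) (F k)"
      using Y unfolding pcomplex_def persistence_module_def by blast
    then have "F k r s 0 = 0" using persistence_module.structure_map_zero rs by blast
    then show ?thesis using N False rs by (simp add: bij_betw_def)
  qed
  then show "compact_pcomplex scale Y F D"
    unfolding compact_pcomplex_def using Y comp T_fin unfolding compact_pmod_def
    by (intro conjI exI[of _ "\<Union>j<N. T j"]) auto
qed

locale persistent_complex =
  fixes scale :: "rat \<Rightarrow> 'v::ab_group_add \<Rightarrow> 'v"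
    and C :: "nat \<Rightarrow> real \<Rightarrow> 'v set"
    and F :: "nat \<Rightarrow> real \<Rightarrow> real \<Rightarrow> 'v \<Rightarrow> 'v"
    and D :: "nat \<Rightarrow> real \<Rightarrow> 'v \<Rightarrow> 'v"
  assumes pcomplex: "pcomplex scale C F D"
begin

lemma persistence_module: "persistence_module scale (C k) (F k)"
  using pcomplex unfolding pcomplex_def persistence_module_def by blast

sublocale rat_vector_space scale
  using pcomplex unfolding pcomplex_def pmod_def rat_vector_space_def by blast

lemma differential_in: "0 \<le> r \<Longrightarrow> x \<in> C k r \<Longrightarrow> D k r x \<in> C (Suc k) r"
  using pcomplex unfolding pcomplex_def by blast

lemma lin_on_differential: "0 \<le> r \<Longrightarrow> lin_on scale (C k r) (D k r)"
  using pcomplex unfolding pcomplex_def by blast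

lemma differential_differential: "0 \<le> r \<Longrightarrow> x \<in> C k r \<Longrightarrow> D (Suc k) r (D k r x) = 0"
  using pcomplex unfolding pcomplex_def by blast

lemma structure_map_differential:
  "0 \<le> r \<Longrightarrow> r \<le> s \<Longrightarrow> x \<in> C k r \<Longrightarrow> F (Suc k) r s (D k r x) = D k s (F k r s x)"
  using pcomplex unfolding pcomplex_def by blast

lemma differential_zero: "0 \<le> r \<Longrightarrow> D k r 0 = 0"
  using lin_on_zero lin_on_differential persistence_module.subspace_V[OF persistence_module] subspace_0
  by blast

lemma pcomplex_sub_pcomplex:
  assumes Y: "sub_pcomplex scale Y C F D"
  shows "pcomplex scale Y F D"
proof -
  have YC: "Y k r \<subseteq> C k r" if "0 \<le> r" for k r
    using Y that unfolding sub_pcomplex_def sub_pmod_def by blast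
  show ?thesis unfolding pcomplex_def
  proof (intro conjI allI impI ballI)
    show "pmod scale (Y k) (F k)" for k
      using pmod_sub_pmod persistence_module.pmod[OF persistence_module] Y
      unfolding sub_pcomplex_def by blast
    show "D k r ` Y k r \<subseteq> Y (Suc k) r" if "0 \<le> r" for k r
      using Y that unfolding sub_pcomplex_def by blast
    show "lin_on scale (Y k r) (D k r)" if "0 \<le> r" for k r
      using lin_on_subset[OF lin_on_differential[OF that] YC[OF that]] .
    show "D (Suc k) r (D k r x) = 0" if "0 \<le> r" "x \<in> Y k r" for k r x
      using differential_differential YC that by blast
    show "F (Suc k) r s (D k r x) = D k s (F k r s x)" if "0 \<le> r \<and> r \<le> s" "x \<in> Y k r" for k r s x
      using structure_map_differential YC that by blast
  qed
qed

lemma generated_differential_image: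
  assumes S: "elements_in (C k) S" and s: "0 \<le> s"
  shows "generated_pmod scale (F (Suc k)) ((\<lambda>(t, y). (t, D k t y)) ` S) s =
    D k s ` generated_pmod scale (F k) S s"
proof -
  interpret Ck: persistence_module scale "C k" "F k" by (rule persistence_module)
  have "generators_at (F (Suc k)) ((\<lambda>(t, y). (t, D k t y)) ` S) s =
      (\<lambda>(t, y). F (Suc k) t s (D k t y)) ` {p\<in>S. fst p \<le> s}"
    unfolding generators_at_def by force
  also have "\<dots> = D k s ` generators_at (F k) S s"
    unfolding generators_at_def image_image
    using S structure_map_differential unfolding elements_in_def by (intro image_cong) auto
  finally show ?thesis unfolding generated_pmod_def
    using lin_on_image_span[OF lin_on_differential[OF s] Ck.subspace_V[OF s] Ck.generators_subset[OF S s]]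
    by simp
qed

lemma compact_sub_pcomplex_two_term:
  assumes W: "sub_pmod scale W (C k) (F k)" "compact_pmod scale W (F k)"
    and Z: "sub_pmod scale Z (C (Suc k)) (F (Suc k))" "compact_pmod scale Z (F (Suc k))"
    and Z_eq: "\<And>s. 0 \<le> s \<Longrightarrow> Z s = D k s ` W s"
  defines "Y \<equiv> \<lambda>j. if j = k then W else if j = Suc k then Z else (\<lambda>_. {0})"
  shows "sub_pcomplex scale Y C F D" "compact_pcomplex scale Y F D"
proof -
  have "sub_pmod scale (Y j) (C j) (F j)" for j
    using W(1) Z(1) persistence_module.sub_pmod_zero[OF persistence_module] unfolding Y_def by auto
  moreover have "D j s ` Y j s \<subseteq> Y (Suc j) s" if s: "0 \<le> s" for j s
  proof -
    consider "j = k" | "j = Suc k" | "j \<noteq> k" "j \<noteq> Suc k" by blast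
    then show ?thesis
    proof cases
      case 1
      then show ?thesis using Z_eq s unfolding Y_def by simp
    next
      case 2
      have "W s \<subseteq> C k s" using W(1) s unfolding sub_pmod_def by blast
      then show ?thesis using 2 Z_eq s differential_differential unfolding Y_def by auto
    next
      case 3
      have "0 \<in> W s" using W(1) s subspace_0 unfolding sub_pmod_def by blast
      then show ?thesis using 3 differential_zero s unfolding Y_def by auto
    qed
  qed
  ultimately show Y: "sub_pcomplex scale Y C F D" unfolding sub_pcomplex_def by blast
  have "compact_pmod scale (Y j) (F j)" for j
    using W(2) Z(2) persistence_module.compact_pmod_zero[OF persistence_module] unfolding Y_def by auto
  moreover have "\<forall>j\<ge>Suc (Suc k). \<forall>r\<ge>0. Y j r = {0}" unfolding Y_def by simp
  ultimately show "compact_pcomplex scale Y F D"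
    using compact_pcomplex_iff[OF pcomplex_sub_pcomplex[OF Y]] by blast
qed

lemma loc_compact_pmod_component:
  assumes "loc_compact_pcomplex scale C F D"
  shows "loc_compact_pmod scale (C k) (F k)"
  unfolding loc_compact_pmod_def
proof (intro allI impI ballI)
  fix r x assume "0 \<le> r" "x \<in> C k r"
  then obtain Y where Y: "sub_pcomplex scale Y C F D" "compact_pcomplex scale Y F D" "x \<in> Y k r"
    using assms unfolding loc_compact_pcomplex_def by blast
  then show "\<exists>W. sub_pmod scale W (C k) (F k) \<and> compact_pmod scale W (F k) \<and> x \<in> W r"
    using compact_pcomplex_iff[OF pcomplex_sub_pcomplex[OF Y(1)]] unfolding sub_pcomplex_def by blast
qed

lemma loc_compact_pcomplexI:
  assumes loc_compact: "\<And>k. loc_compact_pmod scale (C k) (F k)"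
  shows "loc_compact_pcomplex scale C F D"
  unfolding loc_compact_pcomplex_def
proof (intro allI impI ballI)
  fix k r x assume x: "0 \<le> r" "x \<in> C k r"
  interpret C': loc_compact_persistence_module scale "C (Suc k)" "F (Suc k)"
    using persistence_module loc_compact
    by (simp add: loc_compact_persistence_module_def loc_compact_persistence_module_axioms_def)
  obtain W where W: "sub_pmod scale W (C k) (F k)" "compact_pmod scale W (F k)" "x \<in> W r"
    using loc_compact x unfolding loc_compact_pmod_def by blast
  interpret W: persistence_module scale W "F k"
    using W(2) unfolding compact_pmod_def persistence_module_def by blast
  obtain S where S: "finite S" "elements_in W S" "\<And>s. 0 \<le> s \<Longrightarrow> W s = generated_pmod scale (F k) S s"
    using W.compact_pmod_finitely_generated[OF W(2)] by blast
  have SC: "elements_in (C k) S" using S(2) W(1) unfolding elements_in_def sub_pmod_def by blast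
  define S' where "S' = (\<lambda>(t, y). (t, D k t y)) ` S"
  have S': "finite S'" "elements_in (C (Suc k)) S'"
    using S(1) SC differential_in unfolding S'_def elements_in_def by auto
  define Z where "Z = generated_pmod scale (F (Suc k)) S'"
  have Z: "sub_pmod scale Z (C (Suc k)) (F (Suc k))" "compact_pmod scale Z (F (Suc k))"
    unfolding Z_def using C'.sub_pmod_generated[OF S'(2)] C'.compact_generated[OF S'] by auto
  have Z_eq: "Z s = D k s ` W s" if "0 \<le> s" for s
    using generated_differential_image[OF SC that] S(3)[OF that] unfolding Z_def S'_def by simp
  define Y where "Y = (\<lambda>j. if j = k then W else if j = Suc k then Z else (\<lambda>_. {0}))"
  have "sub_pcomplex scale Y C F D" "compact_pcomplex scale Y F D"
    unfolding Y_def using compact_sub_pcomplex_two_term[OF W(1,2) Z Z_eq] by blast+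
  moreover have "x \<in> Y k r" using W(3) unfolding Y_def by simp
  ultimately show "\<exists>Y. sub_pcomplex scale Y C F D \<and> compact_pcomplex scale Y F D \<and> x \<in> Y k r"
    by blast
qed

end

theorem mainTheorem18:
  fixes scale :: "rat \<Rightarrow> 'v::ab_group_add \<Rightarrow> 'v"
    and C :: "nat \<Rightarrow> real \<Rightarrow> 'v set"
    and F :: "nat \<Rightarrow> real \<Rightarrow> real \<Rightarrow> 'v \<Rightarrow> 'v"
    and D :: "nat \<Rightarrow> real \<Rightarrow> 'v \<Rightarrow> 'v"
  assumes "pcomplex scale C F D"
  shows "loc_compact_pcomplex scale C F D \<longleftrightarrow> (\<forall>k. loc_compact_pmod scale (C k) (F k))"
proof -
  interpret persistent_complex scale C F D using assms by (rule persistent_complex.intro)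
  show ?thesis using loc_compact_pmod_component loc_compact_pcomplexI by blast
qed

end
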